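(* Let $\mathcal{X}$ be a Suslin space, $f_1,\dots,f_n\colon\mathcal{X}\to\mathbb{R}$ measurable, $c_1,\dots,c_n\in\mathbb{R}$, and $H:=\{\nu\in\mathcal{M}(\mathcal{X}):f_i\text{ is }\nu\text{-integrable and }\mathbb{E}_\nu[f_i]\le c_i,\ i=1,\dots,n\}$. Let $f\colon\mathcal{X}\to\mathbb{R}$ be semibounded and universally measurable. Then $F(\nu):=\mathbb{E}_{\widehat{\nu}}[f]$, $\nu\in H$, is measure affine on $H$.
   Context: $\widehat{\nu}$ is the completion of $\nu$; universally measurable means measurable w.r.t. the intersection of all completions of the Borel $\sigma$-algebra. $\Sigma(\operatorname{ext}H)$ is the smallest $\sigma$-algebra on the set of extreme points $\operatorname{ext}H$ making all evaluations $\nu\mapsto\nu(A)$, $A$ Borel, measurable. $F$ is measure affine on $H$ if, for every $\nu\in H$ and every probability measure $p$ on $\Sigma(\operatorname{ext}H)$ with $\nu(A)=\int_{\operatorname{ext}H}\nu'(A)\,dp(\nu')$ for all Borel $A$, $F$ is $p$-integrable and $F(\nu)=\int_{\operatorname{ext}H}F(\nu')\,dp(\nu')$. *)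

theory Defs
  imports "HOL-Probability.Probability"
begin

definition prob_measures :: "'a::topological_space measure set" where
  "prob_measures = {\<nu>. prob_space \<nu> \<and> sets \<nu> = sets borel}"

definition universally_measurable_sets :: "'a::topological_space set set" where
  "universally_measurable_sets = (\<Inter>\<mu>\<in>prob_measures. sets (completion \<mu>))"

definition universally_measurable :: "('a::topological_space \<Rightarrow> real) \<Rightarrow> bool" where
  "universally_measurable f \<longleftrightarrow>
     (\<forall>B\<in>sets (borel :: real measure). f -` B \<in> universally_measurable_sets)"

definition semibounded :: "('a \<Rightarrow> real) \<Rightarrow> bool" where
  "semibounded f \<longleftrightarrow> (\<exists>M. \<forall>x. f x \<le> M) \<or> (\<exists>M. \<forall>x. M \<le> f x)"

definition ereal_expect :: "'b measure \<Rightarrow> ('b \<Rightarrow> ereal) \<Rightarrow> ereal" where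
  "ereal_expect M g =
     enn2ereal (\<integral>\<^sup>+ x. e2ennreal (g x) \<partial>M) - enn2ereal (\<integral>\<^sup>+ x. e2ennreal (- g x) \<partial>M)"

definition quasi_integrable :: "'b measure \<Rightarrow> ('b \<Rightarrow> ereal) \<Rightarrow> bool" where
  "quasi_integrable M g \<longleftrightarrow> g \<in> borel_measurable M \<and>
     ((\<integral>\<^sup>+ x. e2ennreal (g x) \<partial>M) < \<infinity> \<or> (\<integral>\<^sup>+ x. e2ennreal (- g x) \<partial>M) < \<infinity>)"

definition ext_points :: "'a::topological_space measure set \<Rightarrow> 'a measure set" where
  "ext_points H = {\<nu>\<in>H. \<forall>\<nu>1\<in>H. \<forall>\<nu>2\<in>H. \<forall>t::real. 0 < t \<and> t < 1 \<and>
       (\<forall>A\<in>sets borel. measure \<nu> A = t * measure \<nu>1 A + (1 - t) * measure \<nu>2 A)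
       \<longrightarrow> \<nu>1 = \<nu> \<and> \<nu>2 = \<nu>}"

definition Sigma_ext :: "'a::topological_space measure set \<Rightarrow> 'a measure measure" where
  "Sigma_ext H = sigma (ext_points H)
     {{\<nu>\<in>ext_points H. measure \<nu> A \<in> B} | A B. A \<in> sets borel \<and> B \<in> sets (borel :: real measure)}"

definition measure_affine :: "'a::topological_space measure set \<Rightarrow> ('a measure \<Rightarrow> ereal) \<Rightarrow> bool" where
  "measure_affine H F \<longleftrightarrow>
     (\<forall>\<nu>\<in>H. \<forall>p. prob_space p \<and> sets p = sets (Sigma_ext H) \<and>
        (\<forall>A\<in>sets borel. measure \<nu> A = (\<integral>\<nu>'. measure \<nu>' A \<partial>p))
        \<longrightarrow> quasi_integrable (completion p) F \<and> F \<nu> = ereal_expect (completion p) F)"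

end

theory Submission imports Defs begin

text \<open>A measure \<open>p\<close> on the extreme points representing \<open>\<nu>\<close> means \<open>\<nu> = p \<bind> id\<close>. For \<open>f\<close>
  bounded below, \<open>f\<close> agrees with a Borel function \<open>h\<close> off a \<open>\<nu>\<close>-null Borel set \<open>N\<close>; since
  \<open>\<nu>(N) = \<integral> \<nu>'(N) dp\<close>, the set \<open>N\<close> is \<open>\<nu>'\<close>-null for \<open>p\<close>-almost every \<open>\<nu>'\<close>, so
  \<open>E\<^sub>\<nu>\<^sub>'[f] = E\<^sub>\<nu>\<^sub>'[h]\<close> almost surely and the integration formula for \<open>\<bind>\<close> gives
  \<open>E\<^sub>\<nu>[f] = \<integral> E\<^sub>\<nu>\<^sub>'[f] dp\<close>. Functions bounded above reduce to this case by negation.\<close>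

lemma measurable_completion_AE_cong:
  assumes g: "g \<in> M \<rightarrow>\<^sub>M N" and ae: "AE x in M. f x = g x"
    and f_space: "\<And>x. x \<in> space M \<Longrightarrow> f x \<in> space N"
  shows "f \<in> completion M \<rightarrow>\<^sub>M N"
proof (rule measurableI)
  show "x \<in> space (completion M) \<Longrightarrow> f x \<in> space N" for x using f_space by simp
  fix B assume B: "B \<in> sets N"
  have A: "g -` B \<inter> space M \<in> sets (completion M)" using g B by (auto intro: measurable_sets)
  have "AE x in completion M. x \<in> g -` B \<inter> space M \<longleftrightarrow> x \<in> f -` B \<inter> space M"
    using AE_completion[OF ae] by (rule eventually_mono) auto
  then show "f -` B \<inter> space (completion M) \<in> sets (completion M)"
    using completion.in_sets_AE[OF _ A] by auto
qed

lemma
  fixes f :: "'a \<Rightarrow> ennreal"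
  assumes K: "(\<lambda>\<mu>. \<mu>) \<in> p \<rightarrow>\<^sub>M subprob_algebra M" and p_nonempty: "space p \<noteq> {}"
    and f: "f \<in> borel_measurable (completion (p \<bind> (\<lambda>\<mu>. \<mu>)))"
  shows measurable_nn_integral_completion_bind:
      "(\<lambda>\<mu>. \<integral>\<^sup>+x. f x \<partial>completion \<mu>) \<in> borel_measurable (completion p)"
    and nn_integral_completion_bind:
      "(\<integral>\<^sup>+x. f x \<partial>completion (p \<bind> (\<lambda>\<mu>. \<mu>))) = (\<integral>\<^sup>+\<mu>. (\<integral>\<^sup>+x. f x \<partial>completion \<mu>) \<partial>completion p)"
proof -
  let ?\<nu> = "p \<bind> (\<lambda>\<mu>. \<mu>)"
  have sets_component: "sets \<mu> = sets M" if "\<mu> \<in> space p" for \<mu>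
    using measurable_space[OF K that] by (simp add: space_subprob_algebra)
  have sets_\<nu>: "sets ?\<nu> = sets M"
    using sets_component p_nonempty by (rule sets_bind)
  obtain h where h_meas: "h \<in> borel_measurable ?\<nu>" and fh: "AE x in ?\<nu>. f x = h x"
    using completion_ex_borel_measurable[OF f] by blast
  have h_M: "h \<in> borel_measurable M"
    using h_meas by (subst (asm) measurable_cong_sets[OF sets_\<nu> refl])
  obtain N where N: "{x\<in>space ?\<nu>. f x \<noteq> h x} \<subseteq> N" "N \<in> null_sets ?\<nu>"
    using fh by (auto elim!: AE_E)
  have N_M: "N \<in> sets M" using N(2) sets_\<nu> by auto
  have "(\<integral>\<^sup>+\<mu>. emeasure \<mu> N \<partial>p) = 0"
    using emeasure_bind[OF p_nonempty K N_M] N(2) by (simp add: null_sets_def)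
  then have "AE \<mu> in p. emeasure \<mu> N = 0"
    using measurable_compose[OF K measurable_emeasure_subprob_algebra[OF N_M]]
    by (subst (asm) nn_integral_0_iff_AE) auto
  then have ae_eq: "AE \<mu> in p. (\<integral>\<^sup>+x. f x \<partial>completion \<mu>) = (\<integral>\<^sup>+x. h x \<partial>\<mu>)"
    using AE_space
  proof eventually_elim
    case (elim \<mu>)
    then have N_null: "N \<in> null_sets \<mu>" and "space \<mu> = space ?\<nu>"
      using sets_component[of \<mu>] N_M sets_\<nu> by (auto simp: null_sets_def dest: sets_eq_imp_space_eq)
    then have "AE x in \<mu>. f x = h x"
      using N(1) by (intro AE_I'[OF N_null]) auto
    then show ?case
      by (simp add: nn_integral_completion cong: nn_integral_cong_AE)
  qed
  show "(\<lambda>\<mu>. \<integral>\<^sup>+x. f x \<partial>completion \<mu>) \<in> borel_measurable (completion p)"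
    using h_M ae_eq
    by (intro measurable_completion_AE_cong[OF measurable_compose[OF K nn_integral_measurable_subprob_algebra]])
      auto
  have "(\<integral>\<^sup>+x. f x \<partial>completion ?\<nu>) = (\<integral>\<^sup>+x. h x \<partial>?\<nu>)"
    using fh by (simp add: nn_integral_completion cong: nn_integral_cong_AE)
  also have "\<dots> = (\<integral>\<^sup>+\<mu>. (\<integral>\<^sup>+x. h x \<partial>\<mu>) \<partial>p)"
    by (rule nn_integral_bind[OF h_M K])
  also have "\<dots> = (\<integral>\<^sup>+\<mu>. (\<integral>\<^sup>+x. f x \<partial>completion \<mu>) \<partial>completion p)"
    using ae_eq by (simp add: nn_integral_completion cong: nn_integral_cong_AE)
  finally show "(\<integral>\<^sup>+x. f x \<partial>completion ?\<nu>) = (\<integral>\<^sup>+\<mu>. (\<integral>\<^sup>+x. f x \<partial>completion \<mu>) \<partial>completion p)" .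
qed

lemma space_Sigma_ext: "space (Sigma_ext H) = ext_points H"
  by (simp add: Sigma_ext_def space_measure_of_conv)

lemma measurable_measure_Sigma_ext:
  assumes "A \<in> sets borel"
  shows "(\<lambda>\<mu>. measure \<mu> A) \<in> borel_measurable (Sigma_ext H)"
proof (rule measurableI)
  fix B :: "real set" assume "B \<in> sets borel"
  then have "{\<mu>\<in>ext_points H. measure \<mu> A \<in> B} \<in> sets (Sigma_ext H)"
    unfolding Sigma_ext_def using assms by (intro in_measure_of) auto
  then show "(\<lambda>\<mu>. measure \<mu> A) -` B \<inter> space (Sigma_ext H) \<in> sets (Sigma_ext H)"
    by (simp add: space_Sigma_ext Int_def conj_commute)
qed auto

lemma emeasure_eq_measure_prob_measures:
  "\<mu> \<in> prob_measures \<Longrightarrow> emeasure \<mu> A = ennreal (measure \<mu> A)"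
  by (auto simp: prob_measures_def intro: finite_measure.emeasure_eq_measure prob_space.finite_measure)

lemma space_subset_prob_measures_Sigma_ext:
  assumes "H \<subseteq> prob_measures" "sets p = sets (Sigma_ext H)"
  shows "space p \<subseteq> prob_measures"
  using assms sets_eq_imp_space_eq[OF assms(2)] by (auto simp: space_Sigma_ext ext_points_def)

lemma measurable_id_subprob_algebra_Sigma_ext:
  assumes H: "H \<subseteq> prob_measures" and p: "sets p = sets (Sigma_ext H)"
  shows "(\<lambda>\<mu>. \<mu>) \<in> p \<rightarrow>\<^sub>M subprob_algebra borel"
proof (rule measurable_subprob_algebra)
  note prob = space_subset_prob_measures_Sigma_ext[OF H p, THEN subsetD]
  show "\<mu> \<in> space p \<Longrightarrow> subprob_space \<mu>" "\<mu> \<in> space p \<Longrightarrow> sets \<mu> = sets borel" for \<mu>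
    by (auto dest!: prob simp: prob_measures_def prob_space_imp_subprob_space)
  fix A :: "'a set" assume A: "A \<in> sets borel"
  have "(\<lambda>\<mu>. ennreal (measure \<mu> A)) \<in> borel_measurable p"
    using measurable_measure_Sigma_ext[OF A] by (simp add: measurable_cong_sets[OF p refl])
  then show "(\<lambda>\<mu>. emeasure \<mu> A) \<in> borel_measurable p"
    by (rule measurable_cong[THEN iffD1, rotated]) (auto dest!: prob simp: emeasure_eq_measure_prob_measures)
qed

lemma representing_measure_eq_bind:
  assumes H: "H \<subseteq> prob_measures" and \<nu>: "\<nu> \<in> prob_measures"
    and p: "prob_space p" "sets p = sets (Sigma_ext H)"
    and rep: "\<forall>A\<in>sets borel. measure \<nu> A = (\<integral>\<mu>. measure \<mu> A \<partial>p)"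
  shows "\<nu> = p \<bind> (\<lambda>\<mu>. \<mu>)"
proof (rule measure_eqI)
  interpret p: prob_space p by (fact p(1))
  note K = measurable_id_subprob_algebra_Sigma_ext[OF H p(2)]
  note prob = space_subset_prob_measures_Sigma_ext[OF H p(2), THEN subsetD]
  show "sets \<nu> = sets (p \<bind> (\<lambda>\<mu>. \<mu>))"
    using \<nu> p.not_empty prob by (auto simp: prob_measures_def)
  fix A assume "A \<in> sets \<nu>"
  then have A: "A \<in> sets borel" using \<nu> by (simp add: prob_measures_def)
  have "integrable p (\<lambda>\<mu>. measure \<mu> A)"
    using measurable_measure_Sigma_ext[OF A]
    by (intro p.integrable_const_bound[where B=1])
      (auto simp: measurable_cong_sets[OF p(2) refl] prob_measures_def intro!: AE_I2 prob_space.prob_le_1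
        dest: prob)
  then have "ennreal (\<integral>\<mu>. measure \<mu> A \<partial>p) = (\<integral>\<^sup>+\<mu>. ennreal (measure \<mu> A) \<partial>p)"
    by (intro nn_integral_eq_integral[symmetric]) auto
  also have "\<dots> = (\<integral>\<^sup>+\<mu>. emeasure \<mu> A \<partial>p)"
    by (intro nn_integral_cong) (simp add: prob emeasure_eq_measure_prob_measures)
  finally show "emeasure \<nu> A = emeasure (p \<bind> (\<lambda>\<mu>. \<mu>)) A"
    using \<nu> rep A emeasure_bind[OF p.not_empty K A] by (simp add: emeasure_eq_measure_prob_measures)
qed

lemma e2ennreal_add_shift:
  fixes y :: ereal
  assumes "- ereal M \<le> y" "0 \<le> M"
  shows "e2ennreal (y + ereal M) + e2ennreal (- y) = e2ennreal y + ennreal M"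
proof (cases y)
  case (real r)
  show ?thesis
  proof (cases "0 \<le> r")
    case False
    then have "ennreal (r + M) + ennreal (- r) = ennreal M"
      using assms real by (subst ennreal_plus[symmetric]) auto
    then show ?thesis using real False by (simp add: ennreal_neg)
  qed (use real assms in \<open>simp add: ennreal_plus ennreal_neg\<close>)
qed (use assms in auto)

lemma nn_integral_e2ennreal_uminus_le:
  assumes "prob_space \<mu>" and lb: "\<And>x. x \<in> space \<mu> \<Longrightarrow> - ereal M \<le> g x"
  shows "(\<integral>\<^sup>+x. e2ennreal (- g x) \<partial>\<mu>) \<le> ennreal M"
proof -
  interpret prob_space \<mu> by fact
  have "(\<integral>\<^sup>+x. e2ennreal (- g x) \<partial>\<mu>) \<le> (\<integral>\<^sup>+x. e2ennreal (ereal M) \<partial>\<mu>)"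
    using lb by (intro nn_integral_mono e2ennreal_mono) (simp add: ereal_uminus_le_reorder)
  then show ?thesis by (simp add: emeasure_space_1)
qed

lemma quasi_integrable_bounded_below:
  assumes "prob_space \<mu>" "g \<in> borel_measurable \<mu>" "\<And>x. x \<in> space \<mu> \<Longrightarrow> - ereal M \<le> g x"
  shows "quasi_integrable \<mu> g"
proof -
  have "(\<integral>\<^sup>+x. e2ennreal (- g x) \<partial>\<mu>) \<le> ennreal M"
    using assms(1,3) by (rule nn_integral_e2ennreal_uminus_le)
  also have "\<dots> < \<infinity>" by simp
  finally show ?thesis using assms(2) unfolding quasi_integrable_def by simp
qed

lemma ereal_expect_shift:
  assumes "prob_space \<mu>" and g: "g \<in> borel_measurable \<mu>"
    and lb: "\<And>x. x \<in> space \<mu> \<Longrightarrow> - ereal M \<le> g x" and "0 \<le> M"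
  shows "ereal_expect \<mu> g = enn2ereal (\<integral>\<^sup>+x. e2ennreal (g x + ereal M) \<partial>\<mu>) - ereal M"
proof -
  interpret prob_space \<mu> by fact
  define pos where "pos = (\<integral>\<^sup>+x. e2ennreal (g x) \<partial>\<mu>)"
  define neg where "neg = (\<integral>\<^sup>+x. e2ennreal (- g x) \<partial>\<mu>)"
  define shifted where "shifted = (\<integral>\<^sup>+x. e2ennreal (g x + ereal M) \<partial>\<mu>)"
  have "shifted + neg = (\<integral>\<^sup>+x. e2ennreal (g x + ereal M) + e2ennreal (- g x) \<partial>\<mu>)"
    unfolding shifted_def neg_def using g by (intro nn_integral_add[symmetric]) auto
  also have "\<dots> = (\<integral>\<^sup>+x. e2ennreal (g x) + ennreal M \<partial>\<mu>)"
    using lb \<open>0 \<le> M\<close> by (intro nn_integral_cong e2ennreal_add_shift) auto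
  also have "\<dots> = pos + ennreal M"
    unfolding pos_def using g by (subst nn_integral_add) (auto simp: emeasure_space_1)
  finally have sum_eq: "shifted + neg = pos + ennreal M" .
  have "neg \<le> ennreal M"
    unfolding neg_def using \<open>prob_space \<mu>\<close> lb by (rule nn_integral_e2ennreal_uminus_le)
  also have "\<dots> < \<infinity>" by simp
  finally obtain c where c: "neg = ennreal c" "0 \<le> c"
    by (cases neg) auto
  have "enn2ereal shifted + ereal c = enn2ereal pos + ereal M"
    using arg_cong[OF sum_eq, of enn2ereal] c \<open>0 \<le> M\<close> by (simp add: plus_ennreal.rep_eq)
  then have "enn2ereal pos - ereal c = enn2ereal shifted - ereal M"
    by (cases "enn2ereal pos"; cases "enn2ereal shifted") auto
  then show ?thesis
    unfolding ereal_expect_def pos_def[symmetric] neg_def[symmetric] shifted_def[symmetric] c(1)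
    using c(2) by simp
qed

lemma ereal_expect_completion_shift:
  assumes "prob_space \<mu>" "f \<in> borel_measurable (completion \<mu>)" "\<And>x. - M \<le> f x" "0 \<le> M"
  shows "ereal_expect (completion \<mu>) (\<lambda>x. ereal (f x)) =
    enn2ereal (\<integral>\<^sup>+x. ennreal (f x + M) \<partial>completion \<mu>) - ereal M"
  using assms by (subst ereal_expect_shift) (auto intro: prob_space.prob_space_completion)

lemma ereal_expect_uminus:
  assumes "quasi_integrable \<mu> g"
  shows "ereal_expect \<mu> (\<lambda>x. - g x) = - ereal_expect \<mu> g"
proof -
  have "enn2ereal a - enn2ereal b = - (enn2ereal b - enn2ereal a)" if "a < \<infinity> \<or> b < \<infinity>" for a b
    using enn2ereal_nonneg[of a] enn2ereal_nonneg[of b] that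
    by (cases "enn2ereal a"; cases "enn2ereal b") auto
  with assms show ?thesis unfolding ereal_expect_def quasi_integrable_def by simp
qed

lemma measure_affine_uminus:
  assumes "measure_affine H F"
  shows "measure_affine H (\<lambda>\<nu>. - F \<nu>)"
  using assms by (auto simp: measure_affine_def quasi_integrable_def ereal_expect_uminus)

lemma measure_affine_cong:
  assumes "measure_affine H F" and eq: "\<And>\<nu>. \<nu> \<in> H \<Longrightarrow> F \<nu> = G \<nu>"
  shows "measure_affine H G"
  unfolding measure_affine_def
proof (intro ballI allI impI)
  fix \<nu> p assume \<nu>: "\<nu> \<in> H"
    and p: "prob_space p \<and> sets p = sets (Sigma_ext H) \<and>
      (\<forall>A\<in>sets borel. measure \<nu> A = (\<integral>\<mu>. measure \<mu> A \<partial>p))"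
  have eq_p: "\<mu> \<in> space (completion p) \<Longrightarrow> F \<mu> = G \<mu>" for \<mu>
    using p sets_eq_imp_space_eq[of p] by (auto simp: space_Sigma_ext ext_points_def intro: eq)
  have "(\<integral>\<^sup>+\<mu>. e2ennreal (F \<mu>) \<partial>completion p) = (\<integral>\<^sup>+\<mu>. e2ennreal (G \<mu>) \<partial>completion p)"
    "(\<integral>\<^sup>+\<mu>. e2ennreal (- F \<mu>) \<partial>completion p) = (\<integral>\<^sup>+\<mu>. e2ennreal (- G \<mu>) \<partial>completion p)"
    by (intro nn_integral_cong; simp add: eq_p)+
  moreover have "F \<in> borel_measurable (completion p) \<longleftrightarrow> G \<in> borel_measurable (completion p)"
    by (intro measurable_cong eq_p)
  ultimately have "quasi_integrable (completion p) F = quasi_integrable (completion p) G"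
    "ereal_expect (completion p) F = ereal_expect (completion p) G"
    unfolding quasi_integrable_def ereal_expect_def by simp_all
  then show "quasi_integrable (completion p) G \<and> G \<nu> = ereal_expect (completion p) G"
    using assms(1)[unfolded measure_affine_def, rule_format, OF \<nu> p] eq[OF \<nu>] by simp
qed

lemma measurable_completion_universally_measurable:
  assumes "universally_measurable f" "\<mu> \<in> prob_measures"
  shows "f \<in> borel_measurable (completion \<mu>)"
proof (rule measurableI)
  fix B :: "real set" assume "B \<in> sets borel"
  then have "f -` B \<in> sets (completion \<mu>)"
    using assms by (auto simp: universally_measurable_def universally_measurable_sets_def)
  then show "f -` B \<inter> space (completion \<mu>) \<in> sets (completion \<mu>)"
    by (metis inf.absorb1 sets.sets_into_space)
qed auto

lemma measure_affine_expect_bounded_below: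
  fixes f :: "'a::topological_space \<Rightarrow> real"
  assumes H: "H \<subseteq> prob_measures"
    and f: "\<And>\<mu>. \<mu> \<in> prob_measures \<Longrightarrow> f \<in> borel_measurable (completion \<mu>)"
    and lb: "\<And>x. - M \<le> f x" and "0 \<le> M"
  shows "measure_affine H (\<lambda>\<nu>. ereal_expect (completion \<nu>) (\<lambda>x. ereal (f x)))"
  unfolding measure_affine_def
proof (intro ballI allI impI conjI)
  fix \<nu> p assume "\<nu> \<in> H"
    and p: "prob_space p \<and> sets p = sets (Sigma_ext H) \<and>
      (\<forall>A\<in>sets borel. measure \<nu> A = (\<integral>\<mu>. measure \<mu> A \<partial>p))"
  then have \<nu>: "\<nu> \<in> prob_measures" using H by auto
  interpret p: prob_space p using p by simp
  let ?F = "\<lambda>\<mu>. ereal_expect (completion \<mu>) (\<lambda>x. ereal (f x))"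
  define Q where "Q \<mu> = (\<integral>\<^sup>+x. ennreal (f x + M) \<partial>completion \<mu>)" for \<mu>
  have prob: "\<mu> \<in> space p \<Longrightarrow> \<mu> \<in> prob_measures" for \<mu>
    using space_subset_prob_measures_Sigma_ext[OF H] p by auto
  have F_Q: "?F \<mu> = enn2ereal (Q \<mu>) - ereal M" if "\<mu> \<in> prob_measures" for \<mu>
    unfolding Q_def using that f[OF that] lb \<open>0 \<le> M\<close>
    by (intro ereal_expect_completion_shift) (auto simp: prob_measures_def)
  have F_lb: "- ereal M \<le> ?F \<mu>" if "\<mu> \<in> prob_measures" for \<mu>
    using F_Q[OF that] enn2ereal_nonneg[of "Q \<mu>"] by (cases "enn2ereal (Q \<mu>)") auto
  note K = measurable_id_subprob_algebra_Sigma_ext[OF H conjunct1[OF conjunct2[OF p]]]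
  have \<nu>_bind: "\<nu> = p \<bind> (\<lambda>\<mu>. \<mu>)"
    using p by (intro representing_measure_eq_bind[OF H \<nu>]) auto
  have f_shift: "(\<lambda>x. ennreal (f x + M)) \<in> borel_measurable (completion (p \<bind> (\<lambda>\<mu>. \<mu>)))"
    using f[OF \<nu>] unfolding \<nu>_bind by measurable
  have Q_meas: "Q \<in> borel_measurable (completion p)"
    unfolding Q_def by (rule measurable_nn_integral_completion_bind[OF K p.not_empty f_shift])
  have Q_\<nu>: "Q \<nu> = (\<integral>\<^sup>+\<mu>. Q \<mu> \<partial>completion p)"
    unfolding Q_def by (subst \<nu>_bind, rule nn_integral_completion_bind[OF K p.not_empty f_shift])
  have F_meas: "?F \<in> borel_measurable (completion p)"
  proof -
    have "(\<lambda>\<mu>. enn2ereal (Q \<mu>) - ereal M) \<in> borel_measurable (completion p)"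
      using Q_meas by measurable
    then show ?thesis
      by (rule measurable_cong[THEN iffD1, rotated]) (simp add: F_Q prob)
  qed
  show "quasi_integrable (completion p) ?F"
    using p.prob_space_completion F_meas by (rule quasi_integrable_bounded_below[where M=M]) (use F_lb prob in auto)
  have "ereal_expect (completion p) ?F = enn2ereal (\<integral>\<^sup>+\<mu>. e2ennreal (?F \<mu> + ereal M) \<partial>completion p) - ereal M"
    using p.prob_space_completion F_meas by (rule ereal_expect_shift) (use F_lb prob \<open>0 \<le> M\<close> in auto)
  also have "(\<integral>\<^sup>+\<mu>. e2ennreal (?F \<mu> + ereal M) \<partial>completion p) = (\<integral>\<^sup>+\<mu>. Q \<mu> \<partial>completion p)"
  proof (intro nn_integral_cong)
    fix \<mu> assume "\<mu> \<in> space (completion p)"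
    then have "?F \<mu> + ereal M = enn2ereal (Q \<mu>)"
      using F_Q[of \<mu>] prob[of \<mu>] enn2ereal_nonneg[of "Q \<mu>"] by (cases "enn2ereal (Q \<mu>)") auto
    then show "e2ennreal (?F \<mu> + ereal M) = Q \<mu>" by simp
  qed
  finally show "?F \<nu> = ereal_expect (completion p) ?F"
    using F_Q[OF \<nu>] Q_\<nu> by simp
qed

lemma measure_affine_expect_bounded_above:
  fixes f :: "'a::topological_space \<Rightarrow> real"
  assumes H: "H \<subseteq> prob_measures"
    and f: "\<And>\<mu>. \<mu> \<in> prob_measures \<Longrightarrow> f \<in> borel_measurable (completion \<mu>)"
    and ub: "\<And>x. f x \<le> M" and "0 \<le> M"
  shows "measure_affine H (\<lambda>\<nu>. ereal_expect (completion \<nu>) (\<lambda>x. ereal (f x)))"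
proof -
  have lb: "- M \<le> - f x" for x using ub[of x] by simp
  have "measure_affine H (\<lambda>\<nu>. ereal_expect (completion \<nu>) (\<lambda>x. ereal (- f x)))"
    using H _ lb \<open>0 \<le> M\<close> by (rule measure_affine_expect_bounded_below) (use f in simp)
  then show ?thesis
  proof (rule measure_affine_uminus[THEN measure_affine_cong])
    fix \<nu> assume "\<nu> \<in> H"
    then have "prob_space (completion \<nu>)" "(\<lambda>x. - f x) \<in> borel_measurable (completion \<nu>)"
      using H f by (auto simp: prob_measures_def prob_space.prob_space_completion)
    then have "quasi_integrable (completion \<nu>) (\<lambda>x. ereal (- f x))"
      using lb by (intro quasi_integrable_bounded_below[where M=M]) auto
    from ereal_expect_uminus[OF this]
    show "- ereal_expect (completion \<nu>) (\<lambda>x. ereal (- f x)) = ereal_expect (completion \<nu>) (\<lambda>x. ereal (f x))"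
      by simp
  qed
qed

theorem lemma9p9:
  fixes g :: "'p::polish_space \<Rightarrow> 'a::t2_space"
    and n :: nat and fs :: "nat \<Rightarrow> 'a \<Rightarrow> real" and cs :: "nat \<Rightarrow> real"
    and H :: "'a measure set" and f :: "'a \<Rightarrow> real"
  assumes suslin: "continuous_on UNIV g" "surj g"
    and fs_meas: "\<And>i. i < n \<Longrightarrow> fs i \<in> borel_measurable borel"
    and H_def: "H = {\<nu>\<in>prob_measures. \<forall>i<n. integrable \<nu> (fs i) \<and> (\<integral>x. fs i x \<partial>\<nu>) \<le> cs i}"
    and f_sb: "semibounded f"
    and f_um: "universally_measurable f"
  shows "measure_affine H (\<lambda>\<nu>. ereal_expect (completion \<nu>) (\<lambda>x. ereal (f x)))"
proof -
  have H: "H \<subseteq> prob_measures" using H_def by auto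
  note f_meas = measurable_completion_universally_measurable[OF f_um]
  from f_sb consider m where "\<And>x. m \<le> f x" | m where "\<And>x. f x \<le> m"
    unfolding semibounded_def by blast
  then show ?thesis
  proof cases
    case (1 m)
    then have "- max 0 (- m) \<le> f x" for x by (smt (verit) max.cobounded2)
    with H f_meas show ?thesis by (rule measure_affine_expect_bounded_below) auto
  next
    case (2 m)
    then have "f x \<le> max 0 m" for x by (smt (verit) max.cobounded2)
    with H f_meas show ?thesis by (rule measure_affine_expect_bounded_above) auto
  qed
qed

end
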